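(* For all relational types $R,R'$, terms $t_1,t_2$ and environment $\gamma$: $t_1\,\llbracket R\simeq R'\rrbracket_\gamma\,t_2$ holds iff $\llbracket R\rrbracket_\gamma=\llbracket R'\rrbracket_\gamma$.
   Context: Terms are those of the pure untyped $\lambda$-calculus, up to $\alpha$-equivalence; $=_{\beta\eta}$ is $\beta\eta$-convertibility. Relational types: $R ::= X \mid R\to R' \mid \forall X.R \mid R^{\cup} \mid R\cdot R' \mid t$ (last form: promotion of a term). A relation on terms is $\beta\eta$-closed if closed under replacing either related term by a $\beta\eta$-equal one; $\mathcal{R}$ is the set of such relations; environments $\gamma$ map finitely many type variables to $\mathcal{R}$. Interpretation: $\llbracket X\rrbracket_\gamma=\gamma(X)$; $t\,\llbracket R\to R'\rrbracket_\gamma\,t'$ iff for all $a,a'$ with $a\,\llbracket R\rrbracket_\gamma\,a'$, $t\,a\,\llbracket R'\rrbracket_\gamma\,t'\,a'$; $\llbracket \forall X.R\rrbracket_\gamma=\bigcap_{r\in\mathcal{R}}\llbracket R\rrbracket_{\gamma[X\mapsto r]}$; $t\,\llbracket R^\cup\rrbracket_\gamma\,t'$ iff $t'\,\llbracket R\rrbracket_\gamma\,t$; $t\,\llbracket R\cdot R'\rrbracket_\gamma\,t'$ iff $\exists t''$, $t\,\llbracket R\rrbracket_\gamma\,t''$ and $t''\,\llbracket R'\rrbracket_\gamma\,t'$; $\llbracket \hat t\rrbracket_\gamma=\{(t,t')\mid \hat t\,t=_{\beta\eta}t'\}$. Let $I:=\lambda x.x$, $K:=\lambda x.\lambda y.x$,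 $t\bullet R:=t\cdot R\cdot t^\cup$, $R\subseteq R':=(K\,I)\bullet(R\to R')$, and $R\simeq R':=(R\subseteq R')\cdot(R'\subseteq R)$. *)

theory Defs
  imports Main
begin

datatype dB = Var nat | App dB dB | Abs dB

primrec lift :: "dB \<Rightarrow> nat \<Rightarrow> dB" where
  "lift (Var i) k = (if i < k then Var i else Var (Suc i))"
| "lift (App s t) k = App (lift s k) (lift t k)"
| "lift (Abs s) k = Abs (lift s (Suc k))"

primrec subst :: "dB \<Rightarrow> dB \<Rightarrow> nat \<Rightarrow> dB" where
  "subst (Var i) s k = (if k < i then Var (i - 1) else if i = k then s else Var i)"
| "subst (App t u) s k = App (subst t s k) (subst u s k)"
| "subst (Abs t) s k = Abs (subst t (lift s 0) (Suc k))"

inductive beta_eta :: "dB \<Rightarrow> dB \<Rightarrow> bool" where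
  beta: "beta_eta (App (Abs s) t) (subst s t 0)"
| eta: "beta_eta (Abs (App (lift s 0) (Var 0))) s"
| appL: "beta_eta s t \<Longrightarrow> beta_eta (App s u) (App t u)"
| appR: "beta_eta s t \<Longrightarrow> beta_eta (App u s) (App u t)"
| abs: "beta_eta s t \<Longrightarrow> beta_eta (Abs s) (Abs t)"

definition beq :: "dB \<Rightarrow> dB \<Rightarrow> bool" where
  "beq = (sup beta_eta beta_eta\<inverse>\<inverse>)\<^sup>*\<^sup>*"

type_synonym tvar = nat
type_synonym rel = "(dB \<times> dB) set"

datatype rty = RVar tvar | Arr rty rty | All tvar rty | Conv rty | Comp rty rty | Prom dB

primrec ftv :: "rty \<Rightarrow> tvar set" where
  "ftv (RVar X) = {X}"
| "ftv (Arr R R') = ftv R \<union> ftv R'"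
| "ftv (All X R) = ftv R - {X}"
| "ftv (Conv R) = ftv R"
| "ftv (Comp R R') = ftv R \<union> ftv R'"
| "ftv (Prom t) = {}"

definition Rcl :: "rel set" where
  "Rcl = {r. \<forall>t t' u u'. (t, t') \<in> r \<and> beq t u \<and> beq t' u' \<longrightarrow> (u, u') \<in> r}"

type_synonym env = "tvar \<Rightarrow> rel option"

primrec interp :: "env \<Rightarrow> rty \<Rightarrow> rel" where
  "interp \<gamma> (RVar X) = (case \<gamma> X of Some r \<Rightarrow> r | None \<Rightarrow> {})"
| "interp \<gamma> (Arr R R') =
     {(t, t'). \<forall>a a'. (a, a') \<in> interp \<gamma> R \<longrightarrow> (App t a, App t' a') \<in> interp \<gamma> R'}"
| "interp \<gamma> (All X R) = (\<Inter>r\<in>Rcl. interp (\<gamma>(X \<mapsto> r)) R)"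
| "interp \<gamma> (Conv R) = {(t, t'). (t', t) \<in> interp \<gamma> R}"
| "interp \<gamma> (Comp R R') = {(t, t'). \<exists>t''. (t, t'') \<in> interp \<gamma> R \<and> (t'', t') \<in> interp \<gamma> R'}"
| "interp \<gamma> (Prom s) = {(t, t'). beq (App s t) t'}"

definition Iterm :: dB where "Iterm = Abs (Var 0)"
definition Kterm :: dB where "Kterm = Abs (Abs (Var 1))"

definition bullet :: "dB \<Rightarrow> rty \<Rightarrow> rty" where
  "bullet t R = Comp (Comp (Prom t) R) (Conv (Prom t))"

definition rsub :: "rty \<Rightarrow> rty \<Rightarrow> rty" where
  "rsub R R' = bullet (App Kterm Iterm) (Arr R R')"

definition requiv :: "rty \<Rightarrow> rty \<Rightarrow> rty" where
  "requiv R R' = Comp (rsub R R') (rsub R' R)"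

end

theory Submission
  imports Defs
begin

text \<open>Every interpretation is closed under beta-eta-conversion, and \<open>K I t\<close> is
  beta-eta-equal to the identity for every \<open>t\<close>. Hence \<open>t (K I)\<bullet>(R \<rightarrow> R') t'\<close> holds
  iff \<open>I\<close> is related to itself by \<open>R \<rightarrow> R'\<close>, i.e. iff \<open>R \<subseteq> R'\<close>, independently of \<open>t\<close>
  and \<open>t'\<close>; composing the two inclusions gives the equality.\<close>

lemma equivclp_map:
  assumes "\<And>x y. r x y \<Longrightarrow> r (f x) (f y)" and "equivclp r x y"
  shows "equivclp r (f x) (f y)"
  using assms(2) by (induction rule: equivclp_induct) (auto intro: assms(1) equivclp_into_equivclp)

lemma beq_eq_equivclp: "beq = equivclp beta_eta"
  by (simp add: beq_def equivclp_def symclp_pointfree)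

lemma beq_refl [simp]: "beq s s"
  by (simp add: beq_eq_equivclp)

lemma beq_sym: "beq s t \<Longrightarrow> beq t s"
  by (simp add: beq_eq_equivclp equivclp_sym)

lemma beq_trans: "beq s t \<Longrightarrow> beq t u \<Longrightarrow> beq s u"
  unfolding beq_eq_equivclp by (rule equivclp_trans)

lemma beta_eta_into_beq: "beta_eta s t \<Longrightarrow> beq s t"
  by (auto simp: beq_eq_equivclp)

lemma beq_App: "beq s s' \<Longrightarrow> beq u u' \<Longrightarrow> beq (App s u) (App s' u')"
proof -
  assume "beq s s'" "beq u u'"
  then have "beq (App s u) (App s' u)" "beq (App s' u) (App s' u')"
    unfolding beq_eq_equivclp
    by (auto intro: equivclp_map[where f = "\<lambda>x. App x u"] equivclp_map[where f = "App s'"]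
        beta_eta.appL beta_eta.appR)
  then show ?thesis by (rule beq_trans)
qed

lemma RclI:
  "(\<And>t t' u u'. (t, t') \<in> r \<Longrightarrow> beq t u \<Longrightarrow> beq t' u' \<Longrightarrow> (u, u') \<in> r) \<Longrightarrow> r \<in> Rcl"
  by (auto simp: Rcl_def)

lemma RclD: "r \<in> Rcl \<Longrightarrow> (t, t') \<in> r \<Longrightarrow> beq t u \<Longrightarrow> beq t' u' \<Longrightarrow> (u, u') \<in> r"
  by (auto simp: Rcl_def)

lemma interp_in_Rcl: "ran \<gamma> \<subseteq> Rcl \<Longrightarrow> interp \<gamma> R \<in> Rcl"
proof (induction R arbitrary: \<gamma>)
  case (RVar X)
  then show ?case
    by (cases "\<gamma> X") (auto simp: Rcl_def ran_def)
next
  case (Arr R1 R2)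
  then have "interp \<gamma> R2 \<in> Rcl" by blast
  then show ?case
    by (auto intro!: RclI elim!: RclD intro: beq_App)
next
  case (All X R)
  have "interp (\<gamma>(X \<mapsto> r)) R \<in> Rcl" if "r \<in> Rcl" for r
  proof -
    have "ran (\<gamma>(X \<mapsto> r)) \<subseteq> Rcl"
      using All.prems that by (auto simp: ran_def)
    then show ?thesis by (rule All.IH)
  qed
  then show ?case
    by (auto intro!: RclI) (meson RclD)
next
  case (Conv R)
  then have "interp \<gamma> R \<in> Rcl" by blast
  then show ?case
    by (auto intro!: RclI elim!: RclD)
next
  case (Comp R1 R2)
  then have "interp \<gamma> R1 \<in> Rcl" "interp \<gamma> R2 \<in> Rcl" by blast+
  then show ?case
    by (auto intro!: RclI) (meson RclD beq_refl)
next
  case (Prom s)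
  show ?case
    by (auto intro!: RclI) (meson beq_App beq_refl beq_sym beq_trans)
qed

lemma interp_bullet:
  assumes "interp \<gamma> R \<in> Rcl"
  shows "(t1, t2) \<in> interp \<gamma> (bullet s R) \<longleftrightarrow> (App s t1, App s t2) \<in> interp \<gamma> R"
proof
  assume "(t1, t2) \<in> interp \<gamma> (bullet s R)"
  then obtain u v where "beq (App s t1) u" "(u, v) \<in> interp \<gamma> R" "beq (App s t2) v"
    by (auto simp: bullet_def)
  then show "(App s t1, App s t2) \<in> interp \<gamma> R"
    using assms by (meson RclD beq_sym)
qed (force simp: bullet_def)

lemma interp_Arr_identities:
  assumes "interp \<gamma> R' \<in> Rcl" and "\<And>a. beq (App f a) a" and "\<And>a. beq (App g a) a"
  shows "(f, g) \<in> interp \<gamma> (Arr R R') \<longleftrightarrow> interp \<gamma> R \<subseteq> interp \<gamma> R'"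
  using assms by (auto 0 4 intro: beq_sym RclD)

lemma beq_KI_App: "beq (App (App (App Kterm Iterm) t) a) a"
proof -
  have "beq (App Kterm Iterm) (Abs Iterm)"
    using beta_eta.beta[of "Abs (Var 1)" Iterm] by (auto simp: Kterm_def Iterm_def dest: beta_eta_into_beq)
  moreover have "beq (App (Abs Iterm) t) Iterm"
    using beta_eta.beta[of Iterm t] by (auto simp: Iterm_def dest: beta_eta_into_beq)
  moreover have "beq (App Iterm a) a"
    using beta_eta.beta[of "Var 0" a] by (auto simp: Iterm_def dest: beta_eta_into_beq)
  ultimately show ?thesis
    by (meson beq_App beq_refl beq_trans)
qed

lemma interp_rsub:
  assumes "ran \<gamma> \<subseteq> Rcl"
  shows "(t1, t2) \<in> interp \<gamma> (rsub R R') \<longleftrightarrow> interp \<gamma> R \<subseteq> interp \<gamma> R'"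
  unfolding rsub_def
  by (simp only: interp_bullet interp_in_Rcl[OF assms] interp_Arr_identities beq_KI_App)

theorem mainTheorem19:
  fixes R R' :: rty and t1 t2 :: dB and \<gamma> :: env
  assumes "finite (dom \<gamma>)"
    and "ran \<gamma> \<subseteq> Rcl"
    and "ftv R \<union> ftv R' \<subseteq> dom \<gamma>"
  shows "(t1, t2) \<in> interp \<gamma> (requiv R R') \<longleftrightarrow> interp \<gamma> R = interp \<gamma> R'"
proof -
  have "(t1, t2) \<in> interp \<gamma> (requiv R R') \<longleftrightarrow>
        (\<exists>m. (t1, m) \<in> interp \<gamma> (rsub R R') \<and> (m, t2) \<in> interp \<gamma> (rsub R' R))"
    by (simp add: requiv_def)
  also have "\<dots> \<longleftrightarrow> interp \<gamma> R \<subseteq> interp \<gamma> R' \<and> interp \<gamma> R' \<subseteq> interp \<gamma> R"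
    by (simp add: interp_rsub[OF assms(2)])
  finally show ?thesis by blast
qed

end
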